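(* Let $a_0, a_1 \in \mathbb{Z}$ and let $u_0, u_1$ be positive rational numbers with $u_0 > u_1$ such that \[ a_0 \arctan u_0 + a_1 \arctan u_1 = \frac{\pi}{4}. \] Then the real number $\alpha := \dfrac{\arctan u_0}{\arctan u_1}$ is irrational. *)

theory Defs
  imports Complex_Main
begin

end

theory Submission
  imports Defs "HOL-Computational_Algebra.Primes"
begin

text \<open>
  If \<open>arctan u\<^sub>0 / arctan u\<^sub>1\<close> were rational, the linear relation with
  \<open>\<pi>/4\<close> would make both \<open>arctan u\<^sub>i\<close> rational multiples of \<open>\<pi>\<close>. By Niven's
  theorem \<open>2 cos (2 arctan u\<^sub>i) = 2 (1 - u\<^sub>i\<^sup>2) / (1 + u\<^sub>i\<^sup>2)\<close> is then an integer,
  and since \<open>\<surd>3\<close> is irrational this forces \<open>u\<^sub>i = 1\<close> for both \<open>i\<close>, contradicting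
  \<open>u\<^sub>1 < u\<^sub>0\<close>.
\<close>

lemma rational_square_neq_prime:
  fixes x :: real and p :: int
  assumes "x \<in> \<rat>" and "prime p"
  shows "x\<^sup>2 \<noteq> of_int p"
proof
  assume x2: "x\<^sup>2 = of_int p"
  obtain a b where b: "b > 0" and cop: "coprime a b" and ab: "x = of_int a / of_int b"
    using assms(1) by (metis Rats_cases')
  have "(of_int a :: real)\<^sup>2 = of_int p * (of_int b)\<^sup>2"
    using x2 ab b by (simp add: field_simps)
  hence eq: "a\<^sup>2 = p * b\<^sup>2"
    by (metis of_int_eq_iff of_int_mult of_int_power)
  hence "p dvd a"
    using assms(2) prime_dvd_power by (metis dvd_triv_left)
  then obtain k where "a = p * k" by blast
  with eq have "p * (p * k\<^sup>2) = p * b\<^sup>2"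
    by (simp add: power2_eq_square ac_simps)
  hence "b\<^sup>2 = p * k\<^sup>2"
    using assms(2) prime_gt_0_int by simp
  hence "p dvd b"
    using assms(2) prime_dvd_power by (metis dvd_triv_left)
  with \<open>p dvd a\<close> cop have "is_unit p" by (metis coprime_common_divisor)
  with assms(2) show False by (simp add: not_prime_unit)
qed

lemma finite_range_cos_int_mult_rational_pi:
  assumes "r \<in> \<rat>"
  shows "finite (range (\<lambda>j::int. cos (of_int j * r * pi)))"
proof -
  obtain m n :: int where n: "n > 0" and r: "r = of_int m / of_int n"
    using assms by (metis Rats_cases')
  have "range (\<lambda>j::int. cos (of_int j * r * pi))
          \<subseteq> (\<lambda>i. cos (of_int i * pi / of_int n)) ` {0..<2*n}"
  proof clarify
    fix j :: int
    define i where "i = j * m mod (2 * n)"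
    define k where "k = j * m div (2 * n)"
    have "j * m = i + 2 * n * k"
      unfolding i_def k_def by simp
    hence "of_int j * of_int m = (of_int i + 2 * of_int n * of_int k :: real)"
      by (metis of_int_add of_int_mult of_int_numeral)
    hence "of_int j * r * pi = of_int i * pi / of_int n + 2 * pi * of_int k"
      using n unfolding r by (simp add: field_simps)
    hence "cos (of_int j * r * pi) = cos (of_int i * pi / of_int n)"
      using sin_cos_eq_iff by blast
    moreover have "i \<in> {0..<2*n}"
      unfolding i_def using n by simp
    ultimately show "cos (of_int j * r * pi) \<in> (\<lambda>i. cos (of_int i * pi / of_int n)) ` {0..<2*n}"
      by blast
  qed
  thus ?thesis by (rule finite_subset) simp
qed

lemma iterate_square_add_int_reduced_fraction:
  fixes y :: "nat \<Rightarrow> 'a::field_char_0" and a b c :: int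
  assumes "y 0 = of_int a / of_int b" and "coprime a b" and "b \<noteq> 0"
    and step: "\<And>k. y (Suc k) = (y k)\<^sup>2 + of_int c"
  shows "\<exists>d. coprime d b \<and> y k = of_int d / of_int b ^ (2 ^ k)"
proof (induction k)
  case 0
  thus ?case using assms(1,2) by auto
next
  case (Suc k)
  then obtain d where d: "coprime d b" "y k = of_int d / of_int b ^ (2 ^ k)" by blast
  define e where "e = d\<^sup>2 + c * (b ^ 2 ^ k)\<^sup>2"
  have "b dvd c * (b ^ 2 ^ k)\<^sup>2"
    by (simp add: power2_eq_square)
  then obtain t where t: "c * (b ^ 2 ^ k)\<^sup>2 = t * b" by (metis dvd_def mult.commute)
  have "gcd b e = gcd b (d\<^sup>2)"
    unfolding e_def t by (metis gcd_add_mult add.commute)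
  moreover have "coprime b (d\<^sup>2)"
    using d(1) by (simp add: ac_simps)
  ultimately have "coprime e b"
    by (simp add: coprime_iff_gcd_eq_1 gcd.commute)
  moreover have "y (Suc k) = of_int e / of_int b ^ (2 ^ Suc k)"
  proof -
    have "(of_int b :: 'a) ^ 2 ^ Suc k = (of_int b ^ 2 ^ k)\<^sup>2"
      by (simp add: power_mult[symmetric] mult.commute)
    thus ?thesis
      using \<open>b \<noteq> 0\<close> unfolding step d(2) e_def by (simp add: field_simps)
  qed
  ultimately show ?case by blast
qed

lemma inj_iterate_square_add_int:
  fixes y :: "nat \<Rightarrow> 'a::field_char_0" and a b c :: int
  assumes y0: "y 0 = of_int a / of_int b" and "coprime a b" and "b > 1"
    and step: "\<And>k. y (Suc k) = (y k)\<^sup>2 + of_int c"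
  shows "inj y"
proof -
  have reduced: "\<exists>d. coprime d b \<and> y k = of_int d / of_int b ^ (2 ^ k)" for k
    using iterate_square_add_int_reduced_fraction[OF y0 \<open>coprime a b\<close> _ step] \<open>b > 1\<close>
    by simp
  have "y k \<noteq> y l" if "k < l" for k l
  proof
    assume eq: "y k = y l"
    obtain d where d: "y k = of_int d / of_int b ^ (2 ^ k)"
      using reduced by blast
    obtain d' where d': "coprime d' b" "y l = of_int d' / of_int b ^ (2 ^ l)"
      using reduced by blast
    define s where "s = 2 ^ l - (2 ^ k :: nat)"
    have "(2 ^ k :: nat) < 2 ^ l"
      using \<open>k < l\<close> by simp
    hence s: "2 ^ l = 2 ^ k + s" and "s > 0"
      unfolding s_def by auto
    have "(of_int d :: 'a) * of_int b ^ (2 ^ l) = of_int d' * of_int b ^ (2 ^ k)"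
      using eq d d'(2) \<open>b > 1\<close> by (simp add: field_simps)
    hence "d * b ^ (2 ^ l) = d' * b ^ (2 ^ k)"
      by (metis of_int_eq_iff of_int_mult of_int_power)
    hence "d' = d * b ^ s"
      using \<open>b > 1\<close> unfolding s by (simp add: power_add)
    hence "b dvd d'"
      using \<open>s > 0\<close> by (simp add: dvd_power)
    with d'(1) have "is_unit b" by (metis coprime_common_divisor dvd_refl)
    with \<open>b > 1\<close> show False by simp
  qed
  thus ?thesis by (metis injI linorder_neqE_nat)
qed

text \<open>
  The values \<open>2 cos (2\<^sup>k r \<pi>)\<close> form a finite set, yet they arise from
  \<open>2 cos (r \<pi>)\<close> by iterating \<open>y \<mapsto> y\<^sup>2 - 2\<close>, which squares the reduced denominator.
\<close>

theorem niven_two_cos: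
  assumes "r \<in> \<rat>" and "2 * cos (r * pi) \<in> \<rat>"
  shows "2 * cos (r * pi) \<in> \<int>"
proof -
  define y where "y k = 2 * cos (of_int (2 ^ k) * r * pi)" for k :: nat
  have step: "y (Suc k) = (y k)\<^sup>2 + of_int (-2)" for k
  proof -
    have "y (Suc k) = 2 * cos (2 * (of_int (2 ^ k) * r * pi))"
      unfolding y_def by (simp add: mult.assoc)
    thus ?thesis
      unfolding y_def cos_double_cos by (simp add: power2_eq_square)
  qed
  have "range y \<subseteq> (\<lambda>x. 2 * x) ` range (\<lambda>j::int. cos (of_int j * r * pi))"
    unfolding y_def by blast
  hence "finite (range y)"
    using finite_range_cos_int_mult_rational_pi[OF assms(1)] finite_subset by blast
  obtain a b :: int where "b > 0" and "coprime a b" and ab: "y 0 = of_int a / of_int b"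
    using assms(2) unfolding y_def by (auto elim: Rats_cases')
  show ?thesis
  proof (cases "b = 1")
    case True
    thus ?thesis using ab unfolding y_def by simp
  next
    case False
    with \<open>b > 0\<close> have "inj y"
      using inj_iterate_square_add_int[OF ab \<open>coprime a b\<close> _ step] by simp
    hence "infinite (range y)"
      using finite_imageD infinite_UNIV_nat by blast
    with \<open>finite (range y)\<close> show ?thesis by blast
  qed
qed

lemma two_cos_double_arctan:
  "2 * cos (2 * arctan u) = 2 * (1 - u\<^sup>2) / (1 + u\<^sup>2)"
proof -
  have pos: "1 + u\<^sup>2 > 0"
    by (simp add: add_pos_nonneg)
  have "cos (2 * arctan u) = 2 / (1 + u\<^sup>2) - 1"
    using pos by (simp add: cos_double_cos cos_arctan power_divide)
  thus ?thesis
    using pos by (simp add: field_simps)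
qed

lemma rational_arctan_rational_multiple_pi:
  fixes u :: real
  assumes "u \<in> \<rat>" and "arctan u / pi \<in> \<rat>"
  shows "u \<in> {-1, 0, 1}"
proof -
  have "2 * (arctan u / pi) \<in> \<rat>"
    using assms(2) by (intro Rats_mult) simp_all
  hence "2 * cos (2 * (arctan u / pi) * pi) \<in> \<int>"
    by (rule niven_two_cos) (simp add: two_cos_double_arctan assms(1))
  then obtain z :: int where z: "2 * cos (2 * arctan u) = of_int z"
    by (auto elim: Ints_cases)
  have u2: "u\<^sup>2 * (2 + of_int z) = 2 - of_int z"
    using z add_pos_nonneg[of 1 "u\<^sup>2"] unfolding two_cos_double_arctan
    by (simp add: field_simps)
  have "\<bar>z\<bar> \<le> 2"
    using abs_cos_le_one[of "2 * arctan u"] z by linarith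
  moreover have "z \<noteq> -2"
    using u2 by auto
  ultimately have "z \<in> {-1, 0, 1, 2}"
    by auto
  moreover have "z \<noteq> -1"
  proof
    assume "z = -1"
    with u2 have "u\<^sup>2 = of_int 3" by simp
    thus False using rational_square_neq_prime[OF assms(1), of 3] by simp
  qed
  moreover have "z \<noteq> 1"
  proof
    assume "z = 1"
    with u2 have "(3 * u)\<^sup>2 = of_int 3" by (simp add: power_mult_distrib)
    thus False using rational_square_neq_prime[of "3 * u" 3] assms(1) by simp
  qed
  ultimately have "u\<^sup>2 = 1 \<or> u\<^sup>2 = 0"
    using u2 by auto
  thus ?thesis by (auto simp: power2_eq_1_iff)
qed

theorem proposition1:
  fixes a0 a1 :: int and u0 u1 :: real
  assumes "u0 \<in> \<rat>" and "u1 \<in> \<rat>"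
    and "0 < u1" and "u1 < u0"
    and "of_int a0 * arctan u0 + of_int a1 * arctan u1 = pi / 4"
  shows "arctan u0 / arctan u1 \<notin> \<rat>"
proof
  define r where "r = arctan u0 / arctan u1"
  assume "r \<in> \<rat>"
  have "arctan u1 \<noteq> 0"
    using \<open>0 < u1\<close> by simp
  hence "arctan u0 = r * arctan u1"
    unfolding r_def by simp
  hence relation: "(of_int a0 * r + of_int a1) * arctan u1 = pi / 4"
    using assms(5) by (simp add: algebra_simps)
  hence "of_int a0 * r + of_int a1 \<noteq> 0"
    by auto
  with relation have "arctan u1 / pi = 1 / (4 * (of_int a0 * r + of_int a1))"
    by (simp add: field_simps)
  hence rat1: "arctan u1 / pi \<in> \<rat>"
    using \<open>r \<in> \<rat>\<close> by simp
  have "arctan u0 / pi = r * (arctan u1 / pi)"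
    using \<open>arctan u0 = r * arctan u1\<close> by simp
  with \<open>r \<in> \<rat>\<close> rat1 have "arctan u0 / pi \<in> \<rat>"
    by (metis Rats_mult)
  hence "u0 = 1" and "u1 = 1"
    using rational_arctan_rational_multiple_pi assms(1-4) rat1 by fastforce+
  with \<open>u1 < u0\<close> show False by simp
qed

end
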